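(* Consider the setting described in the context. For every $k\in\mathcal{K}=\{0,1,\dots,N\}$, the conditional mean $\mathbb{E}[x_k\mid \mathcal{I}^e_k]$ is the minimum mean-square-error estimator of $x_k$ given $\mathcal{I}^e_k$, and it satisfies $$\mathbb{E}[x_k\mid \mathcal{I}^e_k]=A^{\zeta_k}x_{k-\zeta_k}+\sum_{t=1}^{\zeta_k}A^{t-1}Bu_{k-t}.$$
   Context: Let $n,m\ge 1$, $N\in\mathbb{N}$, and $\mathcal{K}=\{0,1,\dots,N\}$. A process evolves as $x_{k+1}=Ax_k+Bu_k+w_k$ with output $y_k=x_{k-\tau_k}$ for $k\in\mathcal{K}$, where $A\in\mathbb{R}^{n\times n}$, $B\in\mathbb{R}^{n\times m}$, $u_k\in\mathbb{R}^m$ is the control input chosen by a controller based on its information, $w_k\in\mathbb{R}^n$ is Gaussian white noise with zero mean and covariance $W\succ 0$, $x_0$ is Gaussian with mean $m_0$ and covariance $M_0$, and $\tau_k\in\mathbb{N}_0$ is a random processing delay with known distribution, with $\tau_0=0$; $x_0$, the $w_k$ and the $\tau_k$ are mutually independent. At each time an event trigger chooses $\delta_k\in\{0,1\}$; if $\delta_k=1$ the current freshest observation is transmitted and received by the controller at time $k+1$ (one-step delay), otherwise nothing is received. The age of information at the event trigger is $\zeta_0=0$ and, for $k\ge1$, $\zeta_k=\tau_k$ if $\tau_k<\zeta_{k-1}+1$ and $\zeta_k=\zeta_{k-1}+1$ otherwise (so $x_{k-\zeta_k}$ is the freshest observation available at the trigger). The age of information at the controller is $\eta_0=\infty$ and,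 for $k\ge1$, $\eta_k=\zeta_{k-1}+1$ if $\delta_{k-1}=1$ and $\eta_k=\eta_{k-1}+1$ otherwise. The information set of the event trigger is $\mathcal{I}^e_k=\{x_{t-\zeta_t},x_{t-\eta_t},\delta_s,u_s : 0\le t\le k,\ 0\le s<k\}$ and that of the controller is $\mathcal{I}^c_k=\{x_{t-\eta_t},\delta_s,u_s: 0\le t\le k,\ 0\le s<k\}$ (entries with infinite age are void). An admissible triggering policy is a family $\pi=\{\mathbb{P}(\delta_k\mid\mathcal{I}^e_k)\}_{k=0}^N$ of Borel measurable transition kernels. *)

theory Defs
  imports "HOL-Probability.Probability"
begin

(* Matrix power A^t (note: the ring instance on vec is componentwise, so we define it). *)
fun matpow :: "real^'n^'n \<Rightarrow> nat \<Rightarrow> real^'n^'n" where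
  "matpow A 0 = mat 1"
| "matpow A (Suc t) = A ** matpow A t"

definition psd_matrix :: "real^'n^'n \<Rightarrow> bool" where
  "psd_matrix S \<longleftrightarrow> transpose S = S \<and> (\<forall>c. 0 \<le> c \<bullet> (S *v c))"

definition pd_matrix :: "real^'n^'n \<Rightarrow> bool" where
  "pd_matrix S \<longleftrightarrow> transpose S = S \<and> (\<forall>c. c \<noteq> 0 \<longrightarrow> 0 < c \<bullet> (S *v c))"

definition normal_law :: "real \<Rightarrow> real \<Rightarrow> real measure" where
  "normal_law m v = (if v = 0 then return borel m else density lborel (normal_density m (sqrt v)))"

definition gaussian_vec :: "'a measure \<Rightarrow> ('a \<Rightarrow> real^'n) \<Rightarrow> real^'n \<Rightarrow> real^'n^'n \<Rightarrow> bool" where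
  "gaussian_vec M X mu S \<longleftrightarrow> psd_matrix S \<and> X \<in> borel_measurable M \<and>
     (\<forall>c. distr M borel (\<lambda>\<omega>. c \<bullet> X \<omega>) = normal_law (c \<bullet> mu) (c \<bullet> (S *v c)))"

fun aoi_e :: "(nat \<Rightarrow> nat) \<Rightarrow> nat \<Rightarrow> nat" where
  "aoi_e tau 0 = 0"
| "aoi_e tau (Suc k) = (if tau (Suc k) < aoi_e tau k + 1 then tau (Suc k) else aoi_e tau k + 1)"

(* age of information at the controller; None encodes infinity *)
fun aoi_c :: "(nat \<Rightarrow> nat) \<Rightarrow> (nat \<Rightarrow> bool) \<Rightarrow> nat \<Rightarrow> nat option" where
  "aoi_c tau d 0 = None"
| "aoi_c tau d (Suc k) = (if d k then Some (aoi_e tau k + 1) else map_option Suc (aoi_c tau d k))"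

definition gen_sets :: "'a measure \<Rightarrow> ('a \<Rightarrow> 'b) \<Rightarrow> 'b measure \<Rightarrow> 'a set set" where
  "gen_sets M f N = {f -` A \<inter> space M | A. A \<in> sets N}"

(* observation received by the controller at time t (void, encoded as 0, if the age is infinite) *)
definition ctrl_obs :: "(nat \<Rightarrow> 'a \<Rightarrow> real^'n) \<Rightarrow> (nat \<Rightarrow> 'a \<Rightarrow> nat) \<Rightarrow> (nat \<Rightarrow> 'a \<Rightarrow> bool) \<Rightarrow> nat \<Rightarrow> 'a \<Rightarrow> real^'n" where
  "ctrl_obs x tau \<delta> t \<omega> = (case aoi_c (\<lambda>s. tau s \<omega>) (\<lambda>s. \<delta> s \<omega>) t of None \<Rightarrow> 0 | Some e \<Rightarrow> x (t - e) \<omega>)"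

definition info_c :: "'a measure \<Rightarrow> (nat \<Rightarrow> 'a \<Rightarrow> real^'n) \<Rightarrow> (nat \<Rightarrow> 'a \<Rightarrow> nat) \<Rightarrow> (nat \<Rightarrow> 'a \<Rightarrow> bool)
     \<Rightarrow> (nat \<Rightarrow> 'a \<Rightarrow> real^'m) \<Rightarrow> nat \<Rightarrow> 'a measure" where
  "info_c M x tau \<delta> u k = sigma (space M)
     ((\<Union>t\<in>{..k}. gen_sets M (\<lambda>\<omega>. aoi_c (\<lambda>s. tau s \<omega>) (\<lambda>s. \<delta> s \<omega>) t) (count_space UNIV)
                 \<union> gen_sets M (ctrl_obs x tau \<delta> t) borel)
      \<union> (\<Union>s\<in>{..<k}. gen_sets M (\<delta> s) (count_space UNIV) \<union> gen_sets M (u s) borel))"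

definition info_e :: "'a measure \<Rightarrow> (nat \<Rightarrow> 'a \<Rightarrow> real^'n) \<Rightarrow> (nat \<Rightarrow> 'a \<Rightarrow> nat) \<Rightarrow> (nat \<Rightarrow> 'a \<Rightarrow> bool)
     \<Rightarrow> (nat \<Rightarrow> 'a \<Rightarrow> real^'m) \<Rightarrow> nat \<Rightarrow> 'a measure" where
  "info_e M x tau \<delta> u k = sigma (space M)
     ((\<Union>t\<in>{..k}. gen_sets M (\<lambda>\<omega>. aoi_e (\<lambda>s. tau s \<omega>) t) (count_space UNIV)
                 \<union> gen_sets M (\<lambda>\<omega>. x (t - aoi_e (\<lambda>s. tau s \<omega>) t) \<omega>) borel)
      \<union> sets (info_c M x tau \<delta> u k))"

(* sources of primitive randomness: initial state, noises, delays, trigger randomization *)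
datatype src = SX0 | SW nat | STau nat | SV nat

end

theory Submission
  imports Defs
begin

text \<open>
  Let z = zeta_k be the age of the freshest observation at the trigger.  Unrolling the dynamics
  z steps back writes x_k as the claimed estimate A^z x_{k-z} + sum_{t=1..z} A^{t-1} B u_{k-t}
  plus the noise sum_{t=1..z} A^{t-1} w_{k-t} that entered after the freshest observation.
  The estimate is measurable with respect to the trigger's information I^e_k, which contains
  zeta_k, x_{k-zeta_k} and the past controls.  The crux is that each noise term w_{k-t},
  restricted to the event t <= zeta_k, is orthogonal to I^e_k: on that event all of I^e_k is a
  function of x_0, of the noises before time k - t, of the delays and of the trigger
  randomisation, which are independent of w_{k-t}.  This is proved by induction along the
  feedback loop, since the controls and triggering decisions that drive the state depend on
  earlier information.  Hence the estimate is the conditional mean, and the conditional mean of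
  a square-integrable variable minimises the mean-square error among all I^e_k-measurable
  estimators.

  Gaussianity is used only through zero mean and finite second moments.
\<close>

section \<open>Vectors and Gaussian moments\<close>

lemma borel_measurable_vec_nth: "f \<in> borel_measurable S \<Longrightarrow> (\<lambda>\<omega>. f \<omega> $ j) \<in> borel_measurable S"
  using borel_measurable_continuous_on[of "\<lambda>y. y $ j" f S]
    continuous_on_component[OF continuous_on_id, of UNIV j] by simp

lemma borel_measurable_vec_lambda:
  "(\<And>i. g i \<in> borel_measurable S) \<Longrightarrow> (\<lambda>\<omega>. (\<chi> i. g i \<omega>) :: real^'n) \<in> borel_measurable S"
  unfolding borel_measurable_euclidean_space[where 'c="real^'n"] Basis_vec_def
  by (auto simp: inner_axis)

lemma borel_measurable_matrix_vector_mult: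
  "f \<in> borel_measurable S \<Longrightarrow> (\<lambda>\<omega>. (C :: real^'p^'q) *v f \<omega>) \<in> borel_measurable S"
  by (rule borel_measurable_continuous_on[OF matrix_vector_mult_linear_continuous_on])

lemma norm_square_vec: "(norm (y :: real^'n))\<^sup>2 = (\<Sum>i\<in>UNIV. (y $ i)\<^sup>2)"
  unfolding power2_norm_eq_inner inner_vec_def by (simp add: power2_eq_square)

lemma nn_integral_norm_square_vec:
  fixes f g :: "'a \<Rightarrow> real^'n"
  assumes "f \<in> borel_measurable M" "g \<in> borel_measurable M"
  shows "(\<integral>\<^sup>+\<omega>. ennreal ((norm (f \<omega> - g \<omega>))\<^sup>2) \<partial>M)
    = (\<Sum>i\<in>UNIV. \<integral>\<^sup>+\<omega>. ennreal ((f \<omega> $ i - g \<omega> $ i)\<^sup>2) \<partial>M)"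
proof -
  have "(\<integral>\<^sup>+\<omega>. ennreal ((norm (f \<omega> - g \<omega>))\<^sup>2) \<partial>M)
      = (\<integral>\<^sup>+\<omega>. (\<Sum>i\<in>UNIV. ennreal ((f \<omega> $ i - g \<omega> $ i)\<^sup>2)) \<partial>M)"
    unfolding norm_square_vec by (simp add: sum_ennreal)
  also have "\<dots> = (\<Sum>i\<in>UNIV. \<integral>\<^sup>+\<omega>. ennreal ((f \<omega> $ i - g \<omega> $ i)\<^sup>2) \<partial>M)"
    by (rule nn_integral_sum)
      (use borel_measurable_vec_nth[OF assms(1)] borel_measurable_vec_nth[OF assms(2)] in measurable)
  finally show ?thesis .
qed

lemma matpow_commute: "matpow C j ** C = C ** matpow C j"
proof (induction j)
  case (Suc j)
  have "matpow C (Suc j) ** C = C ** (matpow C j ** C)" by (simp add: matrix_mul_assoc)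
  then show ?case using Suc by simp
qed simp

lemma normal_law_moments:
  assumes "0 \<le> v"
  shows "integrable (normal_law m v) (\<lambda>y. y\<^sup>2)" and "(\<integral>y. y \<partial>normal_law m v) = m"
proof -
  have "integrable (normal_law m v) (\<lambda>y. y\<^sup>2) \<and> (\<integral>y. y \<partial>normal_law m v) = m"
  proof (cases "v = 0")
    case True
    have dirac: "integrable (return borel m) f" if "f \<in> borel_measurable borel" for f :: "real \<Rightarrow> real"
      unfolding integrable_iff_bounded using that by (simp add: nn_integral_return)
    have "normal_law m v = return borel m" using True by (simp add: normal_law_def)
    then show ?thesis by (simp add: dirac integral_return)
  next
    case False
    let ?\<phi> = "normal_density m (sqrt v)"
    have \<sigma>: "0 < sqrt v" using False assms by simp
    have law: "normal_law m v = density lborel ?\<phi>" using False by (simp add: normal_law_def)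
    have integrable_law: "integrable (normal_law m v) f \<longleftrightarrow> integrable lborel (\<lambda>y. ?\<phi> y * f y)"
      if "f \<in> borel_measurable borel" for f :: "real \<Rightarrow> real"
      unfolding law using integrable_density[of f lborel ?\<phi>] that by simp
    have moment1: "integrable lborel (\<lambda>y. ?\<phi> y * y)" by (rule integrable_normal_moment_nz_1[OF \<sigma>])
    have square: "(\<lambda>y. ?\<phi> y * y\<^sup>2)
        = (\<lambda>y. ?\<phi> y * (y - m)\<^sup>2 + 2 * m * (?\<phi> y * y) - m\<^sup>2 * ?\<phi> y)"
      by (rule ext) (simp add: power2_eq_square algebra_simps)
    have moment2: "integrable lborel (\<lambda>y. ?\<phi> y * y\<^sup>2)"
      unfolding square
      using integrable_normal_moment[OF \<sigma>, of m 2] moment1 integrable_normal_density[OF \<sigma>, of m]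
      by (intro Bochner_Integration.integrable_diff Bochner_Integration.integrable_add integrable_mult_right) auto
    have "(\<integral>y. y \<partial>normal_law m v) = m"
      unfolding law using integral_density[of "\<lambda>y. y" lborel ?\<phi>] integral_normal_moment_nz_1[OF \<sigma>, of m]
      by simp
    with moment1 moment2 show ?thesis by (simp add: integrable_law)
  qed
  then show "integrable (normal_law m v) (\<lambda>y. y\<^sup>2)" and "(\<integral>y. y \<partial>normal_law m v) = m"
    by simp_all
qed

lemma gaussian_vec_component_distr:
  assumes "gaussian_vec M X mu S"
  shows "distr M borel (\<lambda>\<omega>. X \<omega> $ j) = normal_law (mu $ j) (S $ j $ j)" and "0 \<le> S $ j $ j"
proof -
  have mv_axis: "(S *v axis j 1) $ j = S $ j $ j"
    by (simp add: matrix_vector_mult_def axis_def if_distrib cong: if_cong)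
  have "distr M borel (\<lambda>\<omega>. axis j 1 \<bullet> X \<omega>) = normal_law (axis j 1 \<bullet> mu) (axis j 1 \<bullet> (S *v axis j 1))"
    and "0 \<le> axis j 1 \<bullet> (S *v axis j 1)"
    using assms unfolding gaussian_vec_def psd_matrix_def by blast+
  then show "distr M borel (\<lambda>\<omega>. X \<omega> $ j) = normal_law (mu $ j) (S $ j $ j)" and "0 \<le> S $ j $ j"
    by (simp_all add: inner_axis' mv_axis)
qed

lemma gaussian_vec_component_moments:
  assumes "gaussian_vec M X mu S"
  shows "integrable M (\<lambda>\<omega>. (X \<omega> $ j)\<^sup>2)" and "(\<integral>\<omega>. X \<omega> $ j \<partial>M) = mu $ j"
proof -
  have Xj: "(\<lambda>\<omega>. X \<omega> $ j) \<in> borel_measurable M"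
    using assms unfolding gaussian_vec_def by (blast intro: borel_measurable_vec_nth)
  note law = gaussian_vec_component_distr[OF assms, of j]
  note moments = normal_law_moments[OF law(2), of "mu $ j", folded law(1)]
  show "integrable M (\<lambda>\<omega>. (X \<omega> $ j)\<^sup>2)"
    using moments(1) integrable_distr_eq[OF Xj, of "\<lambda>y. y\<^sup>2"] by simp
  show "(\<integral>\<omega>. X \<omega> $ j \<partial>M) = mu $ j"
    using moments(2) integral_distr[OF Xj, of "\<lambda>y. y"] by simp
qed

lemma gaussian_vec_integrable_norm_square:
  "gaussian_vec M X mu S \<Longrightarrow> integrable M (\<lambda>\<omega>. (norm (X \<omega>))\<^sup>2)"
  unfolding norm_square_vec by (intro Bochner_Integration.integrable_sum gaussian_vec_component_moments)

section \<open>Square integrability and least squares\<close>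

definition square_integrable :: "'a measure \<Rightarrow> ('a \<Rightarrow> real) \<Rightarrow> bool" where
  "square_integrable M f \<longleftrightarrow> f \<in> borel_measurable M \<and> integrable M (\<lambda>\<omega>. (f \<omega>)\<^sup>2)"

lemma square_integrable_add:
  assumes "square_integrable M f" "square_integrable M g"
  shows "square_integrable M (\<lambda>\<omega>. f \<omega> + g \<omega>)"
proof -
  have [measurable]: "f \<in> borel_measurable M" "g \<in> borel_measurable M"
    using assms by (auto simp: square_integrable_def)
  have "(f \<omega> + g \<omega>)\<^sup>2 \<le> 2 * (f \<omega>)\<^sup>2 + 2 * (g \<omega>)\<^sup>2" for \<omega>
    using zero_le_power2[of "f \<omega> - g \<omega>"] unfolding power2_diff power2_sum by simp
  then have bound: "norm ((f \<omega> + g \<omega>)\<^sup>2) \<le> norm (2 * (f \<omega>)\<^sup>2 + 2 * (g \<omega>)\<^sup>2)" for \<omega>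
    by (simp add: order_trans[OF _ abs_ge_self])
  have "integrable M (\<lambda>\<omega>. 2 * (f \<omega>)\<^sup>2 + 2 * (g \<omega>)\<^sup>2)"
    using assms by (simp add: square_integrable_def)
  then have "integrable M (\<lambda>\<omega>. (f \<omega> + g \<omega>)\<^sup>2)"
    by (rule Bochner_Integration.integrable_bound) (use bound in simp_all)
  then show ?thesis unfolding square_integrable_def by simp
qed

lemma square_integrable_cmult:
  "square_integrable M f \<Longrightarrow> square_integrable M (\<lambda>\<omega>. a * f \<omega>)"
  unfolding square_integrable_def by (simp add: power_mult_distrib borel_measurable_times)

lemma square_integrable_diff:
  "square_integrable M f \<Longrightarrow> square_integrable M g \<Longrightarrow> square_integrable M (\<lambda>\<omega>. f \<omega> - g \<omega>)"
  using square_integrable_add[of M f "\<lambda>\<omega>. (-1) * g \<omega>"] square_integrable_cmult[of M g "-1"] by simp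

lemma square_integrable_sum:
  "(\<And>i. i \<in> I \<Longrightarrow> square_integrable M (f i)) \<Longrightarrow> square_integrable M (\<lambda>\<omega>. \<Sum>i\<in>I. f i \<omega>)"
proof (induction I rule: infinite_finite_induct)
  case (insert i I)
  then show ?case using square_integrable_add[of M "f i" "\<lambda>\<omega>. \<Sum>i\<in>I. f i \<omega>"] by simp
qed (simp_all add: square_integrable_def)

lemma square_integrable_mult_indicator:
  assumes "A \<in> sets M" "square_integrable M f"
  shows "square_integrable M (\<lambda>\<omega>. indicator A \<omega> * f \<omega>)"
proof -
  have "(\<lambda>\<omega>. (indicator A \<omega> * f \<omega>)\<^sup>2) = (\<lambda>\<omega>. indicator A \<omega> * (f \<omega>)\<^sup>2)"
    by (simp add: indicator_def fun_eq_iff)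
  then show ?thesis
    using assms integrable_real_mult_indicator[of A M "\<lambda>\<omega>. (f \<omega>)\<^sup>2"]
    by (simp add: square_integrable_def mult.commute borel_measurable_times)
qed

lemma square_integrable_cong:
  "(\<And>\<omega>. \<omega> \<in> space M \<Longrightarrow> f \<omega> = g \<omega>) \<Longrightarrow> square_integrable M f \<Longrightarrow> square_integrable M g"
  unfolding square_integrable_def
  by (metis (no_types, lifting) Bochner_Integration.integrable_cong measurable_cong)

lemma integrable_mult_square_integrable:
  assumes "square_integrable M f" "square_integrable M g"
  shows "integrable M (\<lambda>\<omega>. f \<omega> * g \<omega>)"
proof -
  have [measurable]: "f \<in> borel_measurable M" "g \<in> borel_measurable M"
    using assms by (auto simp: square_integrable_def)
  have "\<bar>f \<omega> * g \<omega>\<bar> \<le> (f \<omega>)\<^sup>2 + (g \<omega>)\<^sup>2" for \<omega>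
  proof -
    have "2 * (\<bar>f \<omega>\<bar> * \<bar>g \<omega>\<bar>) \<le> (f \<omega>)\<^sup>2 + (g \<omega>)\<^sup>2"
      using zero_le_power2[of "\<bar>f \<omega>\<bar> - \<bar>g \<omega>\<bar>"] unfolding power2_diff by simp
    then show ?thesis unfolding abs_mult using abs_ge_zero[of "f \<omega>"] abs_ge_zero[of "g \<omega>"]
      by (smt (verit) mult_nonneg_nonneg)
  qed
  then have bound: "norm (f \<omega> * g \<omega>) \<le> norm ((f \<omega>)\<^sup>2 + (g \<omega>)\<^sup>2)" for \<omega>
    by (simp add: order_trans[OF _ abs_ge_self])
  have "integrable M (\<lambda>\<omega>. (f \<omega>)\<^sup>2 + (g \<omega>)\<^sup>2)"
    using assms by (simp add: square_integrable_def)
  then show ?thesis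
    by (rule Bochner_Integration.integrable_bound) (use bound in simp_all)
qed

lemma square_integrable_vec_nth:
  assumes "f \<in> borel_measurable M" "integrable M (\<lambda>\<omega>. (norm (f \<omega>))\<^sup>2)"
  shows "square_integrable M (\<lambda>\<omega>. f \<omega> $ i)"
proof -
  have [measurable]: "(\<lambda>\<omega>. f \<omega> $ i) \<in> borel_measurable M"
    using assms(1) by (rule borel_measurable_vec_nth)
  have bound: "(f \<omega> $ i)\<^sup>2 \<le> (norm (f \<omega>))\<^sup>2" for \<omega>
    using power_mono[OF component_le_norm_cart[of "f \<omega>" i] abs_ge_zero, of 2] by simp
  have "integrable M (\<lambda>\<omega>. (f \<omega> $ i)\<^sup>2)"
    by (rule Bochner_Integration.integrable_bound[OF assms(2)]) (use bound in simp_all)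
  then show ?thesis unfolding square_integrable_def by simp
qed

lemma (in finite_measure) integrable_if_square_integrable:
  "square_integrable M f \<Longrightarrow> integrable M f"
  unfolding square_integrable_def by (blast intro: square_integrable_imp_integrable)

lemma (in sigma_finite_subalgebra) square_integrable_real_cond_exp:
  assumes "integrable M f" "square_integrable M f"
  shows "square_integrable M (real_cond_exp M F f)"
proof -
  have "AE \<omega> in M. (real_cond_exp M F f \<omega>)\<^sup>2 \<le> real_cond_exp M F (\<lambda>\<omega>. (f \<omega>)\<^sup>2) \<omega>"
    by (rule real_cond_exp_jensens_inequality(2)[of f UNIV])
      (use assms convex_power2 in \<open>simp_all add: square_integrable_def\<close>)
  then have bound: "AE \<omega> in M. norm ((real_cond_exp M F f \<omega>)\<^sup>2) \<le> norm (real_cond_exp M F (\<lambda>\<omega>. (f \<omega>)\<^sup>2) \<omega>)"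
    by eventually_elim (simp add: order_trans[OF _ abs_ge_self])
  have "integrable M (\<lambda>\<omega>. (real_cond_exp M F f \<omega>)\<^sup>2)"
    by (rule Bochner_Integration.integrable_bound[OF real_cond_exp_int(1)])
      (use assms(2) bound in \<open>simp_all add: square_integrable_def\<close>)
  then show ?thesis unfolding square_integrable_def by simp
qed

text \<open>Pythagoras: \<open>f - E[f|F]\<close> is orthogonal to every square-integrable \<open>F\<close>-measurable function.\<close>
lemma (in sigma_finite_subalgebra) real_cond_exp_least_squares:
  assumes f: "integrable M f" "square_integrable M f" and h: "h \<in> borel_measurable F"
  shows "(\<integral>\<^sup>+\<omega>. ennreal ((f \<omega> - real_cond_exp M F f \<omega>)\<^sup>2) \<partial>M) \<le> (\<integral>\<^sup>+\<omega>. ennreal ((f \<omega> - h \<omega>)\<^sup>2) \<partial>M)"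
proof (cases "(\<integral>\<^sup>+\<omega>. ennreal ((f \<omega> - h \<omega>)\<^sup>2) \<partial>M) = \<infinity>")
  case False
  define g where "g = real_cond_exp M F f"
  define d where "d = (\<lambda>\<omega>. g \<omega> - h \<omega>)"
  have [measurable]: "f \<in> borel_measurable M" "h \<in> borel_measurable M" "g \<in> borel_measurable M"
    using f(2) measurable_from_subalg[OF subalg h]
    by (auto simp: square_integrable_def g_def borel_measurable_cond_exp2)
  have fh: "square_integrable M (\<lambda>\<omega>. f \<omega> - h \<omega>)"
    using False unfolding square_integrable_def integrable_iff_bounded by (simp add: top.not_eq_extremum)
  have g: "square_integrable M g"
    unfolding g_def by (rule square_integrable_real_cond_exp[OF f])
  have d: "square_integrable M d"
    using square_integrable_diff[OF g square_integrable_diff[OF f(2) fh]] by (simp add: d_def)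
  have fg: "square_integrable M (\<lambda>\<omega>. f \<omega> - g \<omega>)" by (rule square_integrable_diff[OF f(2) g])
  have dF: "d \<in> borel_measurable F" unfolding d_def g_def using h by measurable
  have "(\<integral>\<omega>. d \<omega> * g \<omega> \<partial>M) = (\<integral>\<omega>. d \<omega> * f \<omega> \<partial>M)"
    unfolding g_def by (rule real_cond_exp_intg(2)[OF integrable_mult_square_integrable[OF d f(2)] dF]) simp
  then have orth: "(\<integral>\<omega>. d \<omega> * (f \<omega> - g \<omega>) \<partial>M) = 0"
    using integrable_mult_square_integrable[OF d f(2)] integrable_mult_square_integrable[OF d g]
    by (simp add: right_diff_distrib)
  have expand: "(\<lambda>\<omega>. (f \<omega> - h \<omega>)\<^sup>2) = (\<lambda>\<omega>. (f \<omega> - g \<omega>)\<^sup>2 + 2 * (d \<omega> * (f \<omega> - g \<omega>)) + (d \<omega>)\<^sup>2)"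
    by (simp add: fun_eq_iff d_def power2_eq_square algebra_simps)
  have "integrable M (\<lambda>\<omega>. (f \<omega> - g \<omega>)\<^sup>2)" "integrable M (\<lambda>\<omega>. (d \<omega>)\<^sup>2)"
    using fg d by (simp_all add: square_integrable_def)
  then have "(\<integral>\<omega>. (f \<omega> - h \<omega>)\<^sup>2 \<partial>M) = (\<integral>\<omega>. (f \<omega> - g \<omega>)\<^sup>2 \<partial>M) + (\<integral>\<omega>. (d \<omega>)\<^sup>2 \<partial>M)"
    unfolding expand using integrable_mult_square_integrable[OF d fg] orth by simp
  then have "(\<integral>\<omega>. (f \<omega> - g \<omega>)\<^sup>2 \<partial>M) \<le> (\<integral>\<omega>. (f \<omega> - h \<omega>)\<^sup>2 \<partial>M)" by simp
  moreover have "(\<integral>\<^sup>+\<omega>. ennreal ((f \<omega> - g \<omega>)\<^sup>2) \<partial>M) = ennreal (\<integral>\<omega>. (f \<omega> - g \<omega>)\<^sup>2 \<partial>M)"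
    and "(\<integral>\<^sup>+\<omega>. ennreal ((f \<omega> - h \<omega>)\<^sup>2) \<partial>M) = ennreal (\<integral>\<omega>. (f \<omega> - h \<omega>)\<^sup>2 \<partial>M)"
    using fg fh unfolding square_integrable_def by (simp_all add: nn_integral_eq_integral)
  ultimately show ?thesis unfolding g_def by (simp add: ennreal_leI)
qed simp

section \<open>Ages of information\<close>

lemma aoi_e_le: "aoi_e tau k \<le> k"
  by (induction k) auto

lemma aoi_e_obs_time_mono: "r \<le> s \<Longrightarrow> r - aoi_e tau r \<le> s - aoi_e tau s"
proof (induction s rule: dec_induct)
  case (step s)
  then show ?case using aoi_e_le[of tau s] by auto
qed simp

lemma aoi_c_SomeD: "aoi_c tau d t = Some e \<Longrightarrow> \<exists>t'<t. t - e = t' - aoi_e tau t'"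
proof (induction t arbitrary: e)
  case (Suc t)
  show ?case
  proof (cases "d t")
    case True
    then have "e = aoi_e tau t + 1" using Suc.prems by simp
    then show ?thesis using aoi_e_le[of tau t] by (intro exI[of _ t]) auto
  next
    case False
    then obtain e' where "aoi_c tau d t = Some e'" and e: "e = Suc e'" using Suc.prems by auto
    then obtain t' where "t' < t" "t - e' = t' - aoi_e tau t'" using Suc.IH by blast
    with e show ?thesis by (intro exI[of _ t']) simp
  qed
qed simp

lemma measurable_aoi_e:
  assumes "\<And>r. r \<le> k \<Longrightarrow> tau r \<in> measurable S (count_space UNIV)"
  shows "(\<lambda>\<omega>. aoi_e (\<lambda>r. tau r \<omega>) k) \<in> measurable S (count_space UNIV)"
  using assms
proof (induction k)
  case (Suc k)
  have "(\<lambda>\<omega>. (\<lambda>m. if m < n + 1 then m else n + 1) (tau (Suc k) \<omega>)) \<in> measurable S (count_space UNIV)"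
    for n :: nat
    by (rule measurable_compose[OF Suc.prems[OF order_refl] measurable_count_space])
  from measurable_compose_countable[OF this Suc.IH] Suc.prems show ?case by simp
qed simp

lemma measurable_aoi_c:
  assumes "\<And>r. r < t \<Longrightarrow> \<delta> r \<in> measurable S (count_space UNIV)"
    and "\<And>r. r < t \<Longrightarrow> (\<lambda>\<omega>. aoi_e (\<lambda>s. tau s \<omega>) r) \<in> measurable S (count_space UNIV)"
  shows "(\<lambda>\<omega>. aoi_c (\<lambda>s. tau s \<omega>) (\<lambda>s. \<delta> s \<omega>) t) \<in> measurable S (count_space UNIV)"
  using assms
proof (induction t)
  case (Suc t)
  have [measurable]: "(\<lambda>\<omega>. aoi_c (\<lambda>s. tau s \<omega>) (\<lambda>s. \<delta> s \<omega>) t) \<in> measurable S (count_space UNIV)"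
    "\<delta> t \<in> measurable S (count_space UNIV)"
    "(\<lambda>\<omega>. aoi_e (\<lambda>s. tau s \<omega>) t) \<in> measurable S (count_space UNIV)"
    using Suc by simp_all
  show ?case by simp measurable
qed simp

section \<open>Measurability on an event\<close>

lemma measurable_compose_countable_on:
  fixes g :: "'a \<Rightarrow> 'i::countable"
  assumes "g \<in> measurable S (count_space UNIV)" "\<And>\<omega>. \<omega> \<in> space S \<Longrightarrow> g \<omega> \<in> I"
    and "\<And>i. i \<in> I \<Longrightarrow> f i \<in> measurable S N"
  shows "(\<lambda>\<omega>. f (g \<omega>) \<omega>) \<in> measurable S N"
proof (rule measurable_compose_countable'[OF assms(3)])
  show "g \<in> measurable S (count_space I)"
    using assms(1,2) measurable_sets[OF assms(1), of "{_}"]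
    by (auto simp: measurable_count_space_eq2_countable)
qed simp_all

lemma measurable_iff_gen_sets_subset:
  assumes "space S = space M" "f \<in> space M \<rightarrow> space Y"
  shows "f \<in> measurable S Y \<longleftrightarrow> gen_sets M f Y \<subseteq> sets S"
  using assms unfolding measurable_def gen_sets_def by auto

lemma gen_sets_subset_sets: "f \<in> measurable S Y \<Longrightarrow> space S = space M \<Longrightarrow> gen_sets M f Y \<subseteq> sets S"
  unfolding measurable_def gen_sets_def by auto

lemma Int_stable_gen_sets: "Int_stable (gen_sets M f Y)"
  unfolding Int_stable_def gen_sets_def
proof safe
  fix A B assume "A \<in> sets Y" "B \<in> sets Y"
  then show "\<exists>C. f -` A \<inter> space M \<inter> (f -` B \<inter> space M) = f -` C \<inter> space M \<and> C \<in> sets Y"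
    by (intro exI[of _ "A \<inter> B"]) auto
qed

definition sets_on_event :: "'a measure \<Rightarrow> 'a set \<Rightarrow> 'a set set" where
  "sets_on_event F E = {A. A \<subseteq> space F \<and> A \<inter> E \<in> sets F}"

lemma sigma_algebra_sets_on_event:
  assumes E: "E \<in> sets F"
  shows "sigma_algebra (space F) (sets_on_event F E)"
  unfolding sigma_algebra_iff2
proof (intro conjI allI ballI impI)
  show "sets_on_event F E \<subseteq> Pow (space F)" unfolding sets_on_event_def by blast
  show "{} \<in> sets_on_event F E" unfolding sets_on_event_def by simp
next
  fix A assume "A \<in> sets_on_event F E"
  then have "E - A \<inter> E \<in> sets F" using E unfolding sets_on_event_def by blast
  moreover have "(space F - A) \<inter> E = E - A \<inter> E" using sets.sets_into_space[OF E] by blast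
  ultimately show "space F - A \<in> sets_on_event F E"
    unfolding sets_on_event_def by simp
next
  fix A :: "nat \<Rightarrow> 'a set" assume A: "range A \<subseteq> sets_on_event F E"
  then have "range (\<lambda>i. A i \<inter> E) \<subseteq> sets F" unfolding sets_on_event_def by auto
  then have "(\<Union>i. A i \<inter> E) \<in> sets F" by (rule sets.countable_UN)
  then have "(\<Union>i. A i) \<inter> E \<in> sets F" by simp
  moreover have "(\<Union>i. A i) \<subseteq> space F" using A unfolding sets_on_event_def by auto
  ultimately show "(\<Union>i. A i) \<in> sets_on_event F E"
    unfolding sets_on_event_def by blast
qed

lemma sigma_sets_subset_sets_on_event:
  "G \<subseteq> sets_on_event F E \<Longrightarrow> E \<in> sets F \<Longrightarrow> sigma_sets (space F) G \<subseteq> sets_on_event F E"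
  by (rule sigma_algebra.sigma_sets_subset[OF sigma_algebra_sets_on_event])

lemma sets_on_event_space: "sets_on_event F (space F) = sets F"
proof (intro set_eqI iffI)
  fix A assume "A \<in> sets_on_event F (space F)"
  then have "A \<subseteq> space F" "A \<inter> space F \<in> sets F" unfolding sets_on_event_def by auto
  then show "A \<in> sets F" by (simp add: Int_absorb2)
next
  fix A assume "A \<in> sets F"
  with sets.sets_into_space[OF this] show "A \<in> sets_on_event F (space F)"
    unfolding sets_on_event_def by (simp add: Int_absorb2)
qed

lemma sets_subset_sets_on_event: "E \<in> sets F \<Longrightarrow> sets F \<subseteq> sets_on_event F E"
  unfolding sets_on_event_def using sets.sets_into_space sets.Int by blast

lemma sets_on_event_antimono:
  "E' \<in> sets F \<Longrightarrow> E' \<subseteq> E \<Longrightarrow> sets_on_event F E \<subseteq> sets_on_event F E'"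
  unfolding sets_on_event_def
proof safe
  fix A assume "E' \<in> sets F" "E' \<subseteq> E" "A \<inter> E \<in> sets F"
  moreover have "A \<inter> E' = (A \<inter> E) \<inter> E'" using \<open>E' \<subseteq> E\<close> by blast
  ultimately show "A \<inter> E' \<in> sets F" by auto
qed

lemma measurable_restrict_space_iff_gen_sets:
  assumes "space F = space M" "E \<in> sets F" "f \<in> space M \<rightarrow> space Y"
  shows "f \<in> measurable (restrict_space F E) Y \<longleftrightarrow> gen_sets M f Y \<subseteq> sets_on_event F E"
proof -
  have E: "E \<inter> space F = E" using sets.sets_into_space[OF assms(2)] by blast
  have "f \<in> measurable (restrict_space F E) Y \<longleftrightarrow> (\<forall>B\<in>sets Y. f -` B \<inter> E \<in> sets F)"
    using assms E unfolding measurable_def by (auto simp: space_restrict_space sets_restrict_space_iff)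
  also have "\<dots> \<longleftrightarrow> (\<forall>B\<in>sets Y. (f -` B \<inter> space M) \<inter> E \<in> sets F)"
  proof -
    have "(f -` B \<inter> space M) \<inter> E = f -` B \<inter> E" for B using E assms(1) by blast
    then show ?thesis by simp
  qed
  also have "\<dots> \<longleftrightarrow> gen_sets M f Y \<subseteq> sets_on_event F E"
    using assms(1) unfolding gen_sets_def sets_on_event_def by blast
  finally show ?thesis .
qed

section \<open>The closed loop\<close>

locale aoi_system = prob_space M for M :: "'a measure" +
  fixes N :: nat
    and A :: "real^'n^'n" and B :: "real^'m^'n"
    and x :: "nat \<Rightarrow> 'a \<Rightarrow> real^'n" and w :: "nat \<Rightarrow> 'a \<Rightarrow> real^'n"
    and u :: "nat \<Rightarrow> 'a \<Rightarrow> real^'m" and tau :: "nat \<Rightarrow> 'a \<Rightarrow> nat"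
    and \<delta> :: "nat \<Rightarrow> 'a \<Rightarrow> bool" and v :: "nat \<Rightarrow> 'a \<Rightarrow> real"
  assumes x0_meas: "x 0 \<in> borel_measurable M"
    and x0_L2: "integrable M (\<lambda>\<omega>. (norm (x 0 \<omega>))\<^sup>2)"
    and w_meas: "\<And>k. k \<le> N \<Longrightarrow> w k \<in> borel_measurable M"
    and w_L2: "\<And>k. k \<le> N \<Longrightarrow> integrable M (\<lambda>\<omega>. (norm (w k \<omega>))\<^sup>2)"
    and w_mean: "\<And>k i. k \<le> N \<Longrightarrow> (\<integral>\<omega>. w k \<omega> $ i \<partial>M) = 0"
    and dyn: "\<And>k \<omega>. k < N \<Longrightarrow> \<omega> \<in> space M \<Longrightarrow> x (Suc k) \<omega> = A *v x k \<omega> + B *v u k \<omega> + w k \<omega>"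
    and tau_meas: "\<And>k. k \<le> N \<Longrightarrow> tau k \<in> measurable M (count_space UNIV)"
    and v_meas: "\<And>k. k \<le> N \<Longrightarrow> v k \<in> borel_measurable M"
    and indep: "indep_sets
        (\<lambda>i. case i of SX0 \<Rightarrow> gen_sets M (x 0) borel
                     | SW k \<Rightarrow> gen_sets M (w k) borel
                     | STau k \<Rightarrow> gen_sets M (tau k) (count_space UNIV)
                     | SV k \<Rightarrow> gen_sets M (v k) borel)
        ({SX0} \<union> SW ` {..N} \<union> STau ` {..N} \<union> SV ` {..N})"
    and ctrl: "\<And>k. k \<le> N \<Longrightarrow> u k \<in> borel_measurable (info_c M x tau \<delta> u k)"
    and ctrl_L2: "\<And>k. k \<le> N \<Longrightarrow> integrable M (\<lambda>\<omega>. (norm (u k \<omega>))\<^sup>2)"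
    and trig: "\<And>k. k \<le> N \<Longrightarrow> \<delta> k \<in> measurable
        (sigma (space M) (sets (info_e M x tau \<delta> u k) \<union> gen_sets M (v k) borel)) (count_space UNIV)"
begin

abbreviation "\<Omega> \<equiv> space M"

definition source_sets :: "src \<Rightarrow> 'a set set" where
  "source_sets = (\<lambda>i. case i of SX0 \<Rightarrow> gen_sets M (x 0) borel
                     | SW k \<Rightarrow> gen_sets M (w k) borel
                     | STau k \<Rightarrow> gen_sets M (tau k) (count_space UNIV)
                     | SV k \<Rightarrow> gen_sets M (v k) borel)"

definition sources_before :: "nat \<Rightarrow> src set" where
  "sources_before c = {SX0} \<union> SW ` {..<c} \<union> STau ` {..N} \<union> SV ` {..N}"

text \<open>Generated by all primitive randomness except the noises \<open>w c, w (c + 1), \<dots>\<close>, hence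
  independent of \<open>w c\<close>.\<close>
definition pre_noise :: "nat \<Rightarrow> 'a measure" where
  "pre_noise c = sigma \<Omega> (\<Union>i\<in>sources_before c. source_sets i)"

definition age :: "nat \<Rightarrow> 'a \<Rightarrow> nat" where
  "age k \<omega> = aoi_e (\<lambda>r. tau r \<omega>) k"

text \<open>At time \<open>s\<close> the freshest observation available to the trigger is a state \<open>x j\<close> with \<open>j \<le> c\<close>.\<close>
definition fresh_event :: "nat \<Rightarrow> nat \<Rightarrow> 'a set" where
  "fresh_event s c = {\<omega> \<in> \<Omega>. s - age s \<omega> \<le> c}"

lemma gen_sets_subset_Pow: "gen_sets M f Y \<subseteq> Pow \<Omega>"
  unfolding gen_sets_def by auto

lemma source_sets_subset_Pow: "source_sets i \<subseteq> Pow \<Omega>"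
  unfolding source_sets_def by (auto split: src.splits simp: gen_sets_subset_Pow)

lemma space_pre_noise [simp]: "space (pre_noise c) = \<Omega>"
  unfolding pre_noise_def by (simp add: space_measure_of_conv)

lemma sets_pre_noise: "sets (pre_noise c) = sigma_sets \<Omega> (\<Union>i\<in>sources_before c. source_sets i)"
  unfolding pre_noise_def using source_sets_subset_Pow by (intro sets_measure_of) blast

lemma measurable_pre_noise_source:
  assumes "i \<in> sources_before c" "source_sets i = gen_sets M f Y" "f \<in> \<Omega> \<rightarrow> space Y"
  shows "f \<in> measurable (pre_noise c) Y"
  unfolding measurable_iff_gen_sets_subset[OF space_pre_noise assms(3)] sets_pre_noise
  using assms(1,2) by blast

lemma x0_measurable_pre_noise: "x 0 \<in> borel_measurable (pre_noise c)"
  by (rule measurable_pre_noise_source[of SX0]) (auto simp: sources_before_def source_sets_def)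

lemma w_measurable_pre_noise: "j < c \<Longrightarrow> w j \<in> borel_measurable (pre_noise c)"
  by (rule measurable_pre_noise_source[of "SW j"]) (auto simp: sources_before_def source_sets_def)

lemma tau_measurable_pre_noise: "r \<le> N \<Longrightarrow> tau r \<in> measurable (pre_noise c) (count_space UNIV)"
  by (rule measurable_pre_noise_source[of "STau r"]) (auto simp: sources_before_def source_sets_def)

lemma v_measurable_pre_noise: "r \<le> N \<Longrightarrow> v r \<in> borel_measurable (pre_noise c)"
  by (rule measurable_pre_noise_source[of "SV r"]) (auto simp: sources_before_def source_sets_def)

lemma sets_pre_noise_subset:
  assumes "c \<le> Suc N"
  shows "sets (pre_noise c) \<subseteq> sets M"
proof -
  have "source_sets i \<subseteq> sets M" if i: "i \<in> sources_before c" for i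
  proof (cases i)
    case SX0
    then show ?thesis using gen_sets_subset_sets[OF x0_meas refl] by (simp add: source_sets_def)
  next
    case (SW j)
    with i assms have "j \<le> N" by (auto simp: sources_before_def)
    with SW show ?thesis using gen_sets_subset_sets[OF w_meas refl] by (simp add: source_sets_def)
  next
    case (STau j)
    with i have "j \<le> N" by (auto simp: sources_before_def)
    with STau show ?thesis using gen_sets_subset_sets[OF tau_meas refl] by (simp add: source_sets_def)
  next
    case (SV j)
    with i have "j \<le> N" by (auto simp: sources_before_def)
    with SV show ?thesis using gen_sets_subset_sets[OF v_meas refl] by (simp add: source_sets_def)
  qed
  then show ?thesis unfolding sets_pre_noise by (intro sets.sigma_sets_subset) auto
qed

lemma age_le: "age k \<omega> \<le> k"
  unfolding age_def by (rule aoi_e_le)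

lemma age_measurable_pre_noise: "t \<le> N \<Longrightarrow> age t \<in> measurable (pre_noise c) (count_space UNIV)"
  unfolding age_def[abs_def] by (rule measurable_aoi_e) (auto intro: tau_measurable_pre_noise)

lemma fresh_event_pre_noise:
  assumes "s \<le> N"
  shows "fresh_event s c \<in> sets (pre_noise c)"
proof -
  have [measurable]: "age s \<in> measurable (pre_noise c) (count_space UNIV)"
    using assms by (rule age_measurable_pre_noise)
  have "{\<omega> \<in> space (pre_noise c). s - age s \<omega> \<le> c} \<in> sets (pre_noise c)" by measurable
  then show ?thesis by (simp add: fresh_event_def)
qed

lemma fresh_event_eq_space: "s \<le> c \<Longrightarrow> fresh_event s c = \<Omega>"
  unfolding fresh_event_def by auto

lemma fresh_event_antimono: "r \<le> s \<Longrightarrow> fresh_event s c \<subseteq> fresh_event r c"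
  unfolding fresh_event_def age_def by (auto intro: order_trans[OF aoi_e_obs_time_mono])

abbreviation pre_noise_on :: "nat \<Rightarrow> nat \<Rightarrow> 'a measure" where
  "pre_noise_on s c \<equiv> restrict_space (pre_noise c) (fresh_event s c)"

definition info_c_generators :: "nat \<Rightarrow> 'a set set" where
  "info_c_generators s =
     (\<Union>t\<in>{..s}. gen_sets M (\<lambda>\<omega>. aoi_c (\<lambda>s. tau s \<omega>) (\<lambda>s. \<delta> s \<omega>) t) (count_space UNIV)
                 \<union> gen_sets M (ctrl_obs x tau \<delta> t) borel)
      \<union> (\<Union>r\<in>{..<s}. gen_sets M (\<delta> r) (count_space UNIV) \<union> gen_sets M (u r) borel)"

definition info_e_generators :: "nat \<Rightarrow> 'a set set" where
  "info_e_generators s =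
     (\<Union>t\<in>{..s}. gen_sets M (age t) (count_space UNIV) \<union> gen_sets M (\<lambda>\<omega>. x (t - age t \<omega>) \<omega>) borel)
      \<union> sets (info_c M x tau \<delta> u s)"

lemma space_info_c [simp]: "space (info_c M x tau \<delta> u s) = \<Omega>"
  unfolding info_c_def by (simp add: space_measure_of_conv)

lemma space_info_e [simp]: "space (info_e M x tau \<delta> u s) = \<Omega>"
  unfolding info_e_def by (simp add: space_measure_of_conv)

lemma sets_info_c: "sets (info_c M x tau \<delta> u s) = sigma_sets \<Omega> (info_c_generators s)"
  unfolding info_c_def info_c_generators_def
  by (intro sets_measure_of Un_least UN_least gen_sets_subset_Pow)

lemma sets_info_e: "sets (info_e M x tau \<delta> u s) = sigma_sets \<Omega> (info_e_generators s)"
proof -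
  have age_eq: "age = (\<lambda>t \<omega>. aoi_e (\<lambda>s. tau s \<omega>) t)" by (simp add: fun_eq_iff age_def)
  have "sets (info_c M x tau \<delta> u s) \<subseteq> Pow \<Omega>"
    using sets.space_closed[of "info_c M x tau \<delta> u s"] by simp
  then show ?thesis
    unfolding info_e_def info_e_generators_def age_eq
    by (intro sets_measure_of Un_least UN_least gen_sets_subset_Pow)
qed

lemma sets_info_c_subset_info_e: "sets (info_c M x tau \<delta> u s) \<subseteq> sets (info_e M x tau \<delta> u s)"
  unfolding sets_info_e info_e_generators_def using sigma_sets_superset_generator by blast

lemma measurable_info_e_generator:
  assumes "gen_sets M f Y \<subseteq> info_e_generators k" "space Y = UNIV"
  shows "f \<in> measurable (info_e M x tau \<delta> u k) Y"
  using assms sigma_sets_superset_generator[of "info_e_generators k" \<Omega>]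
  by (subst measurable_iff_gen_sets_subset[OF space_info_e]) (auto simp: sets_info_e)

lemma state_measurable:
  assumes "space S = \<Omega>" "j \<le> N" "x 0 \<in> borel_measurable S"
    and "\<And>r. r < j \<Longrightarrow> u r \<in> borel_measurable S" "\<And>r. r < j \<Longrightarrow> w r \<in> borel_measurable S"
  shows "x j \<in> borel_measurable S"
  using assms(2-)
proof (induction j)
  case (Suc j)
  have "(\<lambda>\<omega>. A *v x j \<omega> + B *v u j \<omega> + w j \<omega>) \<in> borel_measurable S"
    using Suc by (intro borel_measurable_add borel_measurable_matrix_vector_mult) auto
  moreover have "\<omega> \<in> space S \<Longrightarrow> A *v x j \<omega> + B *v u j \<omega> + w j \<omega> = x (Suc j) \<omega>" for \<omega>
    using dyn[of j \<omega>] Suc.prems(1) assms(1) by simp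
  ultimately show ?case
    using measurable_cong[of S "\<lambda>\<omega>. A *v x j \<omega> + B *v u j \<omega> + w j \<omega>" "x (Suc j)"] by (simp only:)
qed simp

lemma gen_sets_subset_on_fresh_event:
  assumes "s \<le> N" "space Y = UNIV" "f \<in> measurable (pre_noise_on s c) Y"
  shows "gen_sets M f Y \<subseteq> sets_on_event (pre_noise c) (fresh_event s c)"
proof -
  have "f \<in> \<Omega> \<rightarrow> space Y" using assms(2) by simp
  from measurable_restrict_space_iff_gen_sets[OF space_pre_noise fresh_event_pre_noise[OF assms(1)] this]
  show ?thesis using assms(3) by simp
qed

lemma measurable_on_fresh_event:
  assumes "r \<le> s" "s \<le> N" "space S = \<Omega>" "space Y = UNIV"
    and "sets S \<subseteq> sets_on_event (pre_noise c) (fresh_event r c)" "f \<in> measurable S Y"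
  shows "f \<in> measurable (pre_noise_on s c) Y"
proof -
  have "sets_on_event (pre_noise c) (fresh_event r c) \<subseteq> sets_on_event (pre_noise c) (fresh_event s c)"
    using assms(1,2) by (intro sets_on_event_antimono fresh_event_pre_noise fresh_event_antimono)
  then have "gen_sets M f Y \<subseteq> sets_on_event (pre_noise c) (fresh_event s c)"
    using gen_sets_subset_sets[OF assms(6,3)] assms(5) by blast
  moreover have "f \<in> \<Omega> \<rightarrow> space Y" using assms(4) by simp
  ultimately show ?thesis
    using measurable_restrict_space_iff_gen_sets[OF space_pre_noise fresh_event_pre_noise[OF assms(2)]] by blast
qed

lemma ctrl_measurable_on_fresh_event:
  assumes "r \<le> s" "s \<le> N"
    and "sets (info_e M x tau \<delta> u r) \<subseteq> sets_on_event (pre_noise c) (fresh_event r c)"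
  shows "u r \<in> borel_measurable (pre_noise_on s c)"
  using assms sets_info_c_subset_info_e ctrl[of r]
  by (intro measurable_on_fresh_event[of r s "info_c M x tau \<delta> u r"]) auto

lemma trig_measurable_on_fresh_event:
  assumes "r \<le> s" "s \<le> N"
    and "sets (info_e M x tau \<delta> u r) \<subseteq> sets_on_event (pre_noise c) (fresh_event r c)"
  shows "\<delta> r \<in> measurable (pre_noise_on s c) (count_space UNIV)"
proof (rule measurable_on_fresh_event[OF assms(1,2) _ _ _ trig])
  let ?G = "sets (info_e M x tau \<delta> u r) \<union> gen_sets M (v r) borel"
  have r: "r \<le> N" using assms by simp
  have "gen_sets M (v r) borel \<subseteq> sets_on_event (pre_noise c) (fresh_event r c)"
    using gen_sets_subset_sets[OF v_measurable_pre_noise[OF r] space_pre_noise]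
      sets_subset_sets_on_event[OF fresh_event_pre_noise[OF r]] by blast
  then have "sigma_sets \<Omega> ?G \<subseteq> sets_on_event (pre_noise c) (fresh_event r c)"
    using sigma_sets_subset_sets_on_event[OF _ fresh_event_pre_noise[OF r], of ?G] assms(3) by simp
  moreover have "?G \<subseteq> Pow \<Omega>"
    using sets.space_closed[of "info_e M x tau \<delta> u r"] gen_sets_subset_Pow[of "v r" borel] by simp
  ultimately show "sets (sigma \<Omega> ?G) \<subseteq> sets_on_event (pre_noise c) (fresh_event r c)"
    by (simp add: sets_measure_of)
qed (use assms(1,2) in \<open>auto simp: space_measure_of_conv\<close>)

lemma state_measurable_pre_noise:
  assumes IH: "\<And>r. r < s \<Longrightarrow> sets (info_e M x tau \<delta> u r) \<subseteq> sets_on_event (pre_noise c) (fresh_event r c)"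
    and "s \<le> N" "j \<le> min s c"
  shows "x j \<in> borel_measurable (pre_noise c)"
proof (rule state_measurable[OF space_pre_noise _ x0_measurable_pre_noise])
  show "j \<le> N" using assms(2,3) by simp
  fix r assume r: "r < j"
  then have r_s: "r < s" and r_N: "r \<le> N" and r_c: "r \<le> c" using assms(2,3) by simp_all
  have "fresh_event r c = space (pre_noise c)" using r_c by (simp add: fresh_event_eq_space)
  then have "sets (info_e M x tau \<delta> u r) \<subseteq> sets (pre_noise c)"
    using IH[OF r_s] sets_on_event_space[of "pre_noise c"] by simp
  then have "gen_sets M (u r) borel \<subseteq> sets (pre_noise c)"
    using gen_sets_subset_sets[OF ctrl[OF r_N] space_info_c] sets_info_c_subset_info_e by blast
  then show "u r \<in> borel_measurable (pre_noise c)"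
    using measurable_iff_gen_sets_subset[OF space_pre_noise, of "u r" borel] by simp
  show "w r \<in> borel_measurable (pre_noise c)"
    using r assms(3) by (intro w_measurable_pre_noise) simp
qed

lemma freshest_obs_measurable_on_fresh_event:
  assumes "t \<le> s" "s \<le> N" and x: "\<And>j. j \<le> min s c \<Longrightarrow> x j \<in> borel_measurable (pre_noise c)"
  shows "(\<lambda>\<omega>. x (t - age t \<omega>) \<omega>) \<in> borel_measurable (pre_noise_on s c)"
proof (rule measurable_compose_countable_on[where I = "{..min s c}"])
  show "(\<lambda>\<omega>. t - age t \<omega>) \<in> measurable (pre_noise_on s c) (count_space UNIV)"
    using assms(1,2)
    by (intro measurable_compose[OF measurable_restrict_space1[OF age_measurable_pre_noise] measurable_count_space])
      simp
  fix \<omega> assume "\<omega> \<in> space (pre_noise_on s c)"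
  then have "s - age s \<omega> \<le> c" by (simp add: space_restrict_space fresh_event_def)
  moreover have "t - age t \<omega> \<le> s - age s \<omega>"
    unfolding age_def by (rule aoi_e_obs_time_mono[OF assms(1)])
  ultimately show "t - age t \<omega> \<in> {..min s c}" using assms(1) by auto
qed (use x in \<open>auto intro: measurable_restrict_space1\<close>)

lemma ctrl_obs_measurable_on_fresh_event:
  assumes "t \<le> s" "s \<le> N" and x: "\<And>j. j \<le> min s c \<Longrightarrow> x j \<in> borel_measurable (pre_noise c)"
    and aoi: "(\<lambda>\<omega>. aoi_c (\<lambda>r. tau r \<omega>) (\<lambda>r. \<delta> r \<omega>) t) \<in> measurable (pre_noise_on s c) (count_space UNIV)"
  shows "ctrl_obs x tau \<delta> t \<in> borel_measurable (pre_noise_on s c)"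
proof -
  let ?f = "\<lambda>e. case e of None \<Rightarrow> (\<lambda>\<omega>. 0) | Some e \<Rightarrow> x (t - e)"
  have "(\<lambda>\<omega>. ?f (aoi_c (\<lambda>r. tau r \<omega>) (\<lambda>r. \<delta> r \<omega>) t) \<omega>) \<in> borel_measurable (pre_noise_on s c)"
  proof (rule measurable_compose_countable_on[OF aoi, where I = "{None} \<union> Some ` {e. t - e \<le> min s c}"])
    fix \<omega> assume "\<omega> \<in> space (pre_noise_on s c)"
    then have fresh: "s - age s \<omega> \<le> c" by (simp add: space_restrict_space fresh_event_def)
    show "aoi_c (\<lambda>r. tau r \<omega>) (\<lambda>r. \<delta> r \<omega>) t \<in> {None} \<union> Some ` {e. t - e \<le> min s c}"
    proof (cases "aoi_c (\<lambda>r. tau r \<omega>) (\<lambda>r. \<delta> r \<omega>) t")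
      case (Some e)
      then obtain t' where t': "t' < t" "t - e = t' - age t' \<omega>"
        using aoi_c_SomeD[OF Some] unfolding age_def by blast
      have "t' - age t' \<omega> \<le> s - age s \<omega>"
        unfolding age_def by (rule aoi_e_obs_time_mono) (use t' assms(1) in simp)
      with fresh t' assms(1) have "t - e \<le> min s c" by simp
      with Some show ?thesis by simp
    qed simp
  next
    fix e assume e: "e \<in> {None} \<union> Some ` {e. t - e \<le> min s c}"
    show "?f e \<in> borel_measurable (pre_noise_on s c)"
    proof (cases e)
      case (Some e')
      with e have "t - e' \<le> min s c" by auto
      with Some show ?thesis using x by (simp add: measurable_restrict_space1)
    qed simp
  qed
  moreover have "(\<lambda>\<omega>. ?f (aoi_c (\<lambda>r. tau r \<omega>) (\<lambda>r. \<delta> r \<omega>) t) \<omega>) = ctrl_obs x tau \<delta> t"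
    by (simp add: fun_eq_iff ctrl_obs_def split: option.split)
  ultimately show ?thesis by simp
qed

lemma age_measurable_on_fresh_event:
  "t \<le> N \<Longrightarrow> age t \<in> measurable (pre_noise_on s c) (count_space UNIV)"
  by (intro measurable_restrict_space1 age_measurable_pre_noise)

lemma info_c_on_fresh_event:
  assumes "s \<le> N"
    and IH: "\<And>r. r < s \<Longrightarrow> sets (info_e M x tau \<delta> u r) \<subseteq> sets_on_event (pre_noise c) (fresh_event r c)"
  shows "sets (info_c M x tau \<delta> u s) \<subseteq> sets_on_event (pre_noise c) (fresh_event s c)"
proof -
  have x: "x j \<in> borel_measurable (pre_noise c)" if "j \<le> min s c" for j
    using state_measurable_pre_noise[OF IH assms(1) that] .
  have \<delta>: "\<delta> r \<in> measurable (pre_noise_on s c) (count_space UNIV)" if "r < s" for r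
    using trig_measurable_on_fresh_event[OF _ assms(1) IH[OF that]] that by simp
  have aoi: "(\<lambda>\<omega>. aoi_c (\<lambda>r. tau r \<omega>) (\<lambda>r. \<delta> r \<omega>) t) \<in> measurable (pre_noise_on s c) (count_space UNIV)"
    if "t \<le> s" for t
    using that assms(1)
    by (intro measurable_aoi_c \<delta> age_measurable_on_fresh_event[unfolded age_def[abs_def]]) simp_all
  note on_event = gen_sets_subset_on_fresh_event[OF assms(1)]
  have "info_c_generators s \<subseteq> sets_on_event (pre_noise c) (fresh_event s c)"
    unfolding info_c_generators_def
  proof (intro Un_least UN_least)
    fix t assume "t \<in> {..s}"
    then have t: "t \<le> s" by simp
    show "gen_sets M (\<lambda>\<omega>. aoi_c (\<lambda>s. tau s \<omega>) (\<lambda>s. \<delta> s \<omega>) t) (count_space UNIV)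
        \<subseteq> sets_on_event (pre_noise c) (fresh_event s c)"
      by (rule on_event[OF _ aoi[OF t]]) simp
    show "gen_sets M (ctrl_obs x tau \<delta> t) borel \<subseteq> sets_on_event (pre_noise c) (fresh_event s c)"
      by (rule on_event[OF _ ctrl_obs_measurable_on_fresh_event[OF t assms(1) x aoi[OF t]]]) simp
  next
    fix r assume "r \<in> {..<s}"
    then have r: "r < s" by simp
    show "gen_sets M (\<delta> r) (count_space UNIV) \<subseteq> sets_on_event (pre_noise c) (fresh_event s c)"
      by (rule on_event[OF _ \<delta>[OF r]]) simp
    show "gen_sets M (u r) borel \<subseteq> sets_on_event (pre_noise c) (fresh_event s c)"
      using r by (intro on_event[OF _ ctrl_measurable_on_fresh_event[OF _ assms(1) IH[OF r]]]) simp_all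
  qed
  then show ?thesis
    unfolding sets_info_c using sigma_sets_subset_sets_on_event[OF _ fresh_event_pre_noise[OF assms(1)]]
    by simp
qed

text \<open>On the event that the trigger's freshest observation at time \<open>s\<close> is not newer than
  \<open>x c\<close>, the trigger's information is determined by data independent of \<open>w c, w (c + 1), \<dots>\<close>.
  The induction follows the feedback loop: states depend on past controls, which depend on past
  information.\<close>
lemma info_e_on_fresh_event:
  "s \<le> N \<Longrightarrow> sets (info_e M x tau \<delta> u s) \<subseteq> sets_on_event (pre_noise c) (fresh_event s c)"
proof (induction s rule: less_induct)
  case (less s)
  then have IH: "sets (info_e M x tau \<delta> u r) \<subseteq> sets_on_event (pre_noise c) (fresh_event r c)"
    if "r < s" for r
    using that by simp
  have x: "x j \<in> borel_measurable (pre_noise c)" if "j \<le> min s c" for j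
    using state_measurable_pre_noise[OF IH less.prems that] .
  note on_event = gen_sets_subset_on_fresh_event[OF less.prems]
  have "info_e_generators s \<subseteq> sets_on_event (pre_noise c) (fresh_event s c)"
    unfolding info_e_generators_def
  proof (intro Un_least UN_least info_c_on_fresh_event[OF less.prems IH])
    fix t assume "t \<in> {..s}"
    then have t: "t \<le> s" by simp
    show "gen_sets M (age t) (count_space UNIV) \<subseteq> sets_on_event (pre_noise c) (fresh_event s c)"
      using t less.prems by (intro on_event[OF _ age_measurable_on_fresh_event]) simp_all
    show "gen_sets M (\<lambda>\<omega>. x (t - age t \<omega>) \<omega>) borel \<subseteq> sets_on_event (pre_noise c) (fresh_event s c)"
      by (rule on_event[OF _ freshest_obs_measurable_on_fresh_event[OF t less.prems x]]) simp
  qed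
  then show ?case
    unfolding sets_info_e using sigma_sets_subset_sets_on_event[OF _ fresh_event_pre_noise[OF less.prems]]
    by simp
qed

lemma sets_info_e_subset: "s \<le> N \<Longrightarrow> sets (info_e M x tau \<delta> u s) \<subseteq> sets M"
  using info_e_on_fresh_event[of s N] fresh_event_eq_space[of s N] sets_on_event_space[of "pre_noise N"]
    sets_pre_noise_subset[of N] by simp

lemma info_e_restrict_pre_noise:
  assumes "k \<le> N" "t \<le> k" "Q \<in> sets (info_e M x tau \<delta> u k)"
  shows "Q \<inter> {\<omega> \<in> \<Omega>. t \<le> age k \<omega>} \<in> sets (pre_noise (k - t))"
proof -
  have "{\<omega> \<in> \<Omega>. t \<le> age k \<omega>} = fresh_event k (k - t)"
    unfolding fresh_event_def using assms(2) age_le[of k] by (auto simp: le_diff_conv2)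
  then show ?thesis
    using info_e_on_fresh_event[OF assms(1), of "k - t"] assms(3) by (auto simp: sets_on_event_def)
qed

section \<open>Independence of the unobserved noise\<close>

lemma indep_pre_noise_noise:
  assumes "c \<le> N"
  shows "indep_set (sets (pre_noise c)) (sigma_sets \<Omega> (source_sets (SW c)))"
proof -
  define I where "I = (\<lambda>b. if b then sources_before c else {SW c})"
  have "indep_sets source_sets ({SX0} \<union> SW ` {..N} \<union> STau ` {..N} \<union> SV ` {..N})"
    using indep unfolding source_sets_def .
  then have "indep_sets source_sets (\<Union>b. I b)"
    by (rule indep_sets_mono_index[rotated]) (use assms in \<open>auto simp: I_def sources_before_def\<close>)
  then have "indep_sets (\<lambda>b. sigma_sets \<Omega> (\<Union>i\<in>I b. source_sets i)) UNIV"
  proof (rule indep_sets_collect_sigma)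
    show "Int_stable (source_sets i)" for i
      unfolding source_sets_def by (cases i) (simp_all add: Int_stable_gen_sets)
    show "disjoint_family_on I UNIV"
      unfolding disjoint_family_on_def I_def sources_before_def by auto
  qed
  moreover have "(\<lambda>b. sigma_sets \<Omega> (\<Union>i\<in>I b. source_sets i))
      = case_bool (sets (pre_noise c)) (sigma_sets \<Omega> (source_sets (SW c)))"
    by (rule ext) (simp split: bool.split add: I_def sets_pre_noise)
  ultimately show ?thesis unfolding indep_set_def by simp
qed

lemma square_integrable_noise: "k \<le> N \<Longrightarrow> square_integrable M (\<lambda>\<omega>. w k \<omega> $ i)"
  by (rule square_integrable_vec_nth[OF w_meas w_L2])

lemma indep_var_indicator_noise:
  assumes "c \<le> N" "Q \<in> sets (pre_noise c)"
  shows "indep_var borel (indicator Q) borel (\<lambda>\<omega>. w c \<omega> $ j)"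
  unfolding indep_var_eq
proof (intro conjI)
  show "random_variable borel (indicator Q)"
    using assms sets_pre_noise_subset[of c] by (intro borel_measurable_indicator) auto
  show "random_variable borel (\<lambda>\<omega>. w c \<omega> $ j)"
    using w_meas[OF assms(1)] by (rule borel_measurable_vec_nth)
  have Q_sets: "sigma_sets \<Omega> {indicator Q -` A \<inter> \<Omega> |A. A \<in> sets borel} \<subseteq> sets (pre_noise c)"
    using measurable_sets[OF borel_measurable_indicator[OF assms(2)]] sets.top[of "pre_noise c"]
    by (intro sets.sigma_sets_subset'[of _ "pre_noise c", simplified]) auto
  have w_sets: "sigma_sets \<Omega> {(\<lambda>\<omega>. w c \<omega> $ j) -` A \<inter> \<Omega> |A. A \<in> sets borel}
      \<subseteq> sigma_sets \<Omega> (source_sets (SW c))"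
  proof (rule sigma_sets_mono', safe)
    fix A :: "real set" assume "A \<in> sets borel"
    then have "(\<lambda>y::real^'n. y $ j) -` A \<in> sets borel"
      using measurable_sets[OF borel_measurable_vec_nth[OF measurable_ident_sets[OF refl]]] by simp
    then show "(\<lambda>\<omega>. w c \<omega> $ j) -` A \<inter> \<Omega> \<in> source_sets (SW c)"
      unfolding source_sets_def gen_sets_def by (auto intro!: exI[of _ "(\<lambda>y. y $ j) -` A"])
  qed
  show "indep_set (sigma_sets \<Omega> {indicator Q -` A \<inter> \<Omega> |A. A \<in> sets borel})
      (sigma_sets \<Omega> {(\<lambda>\<omega>. w c \<omega> $ j) -` A \<inter> \<Omega> |A. A \<in> sets borel})"
    using indep_pre_noise_noise[OF assms(1)] unfolding indep_set_def
    by (rule indep_sets_mono_sets) (use Q_sets w_sets in \<open>auto split: bool.split\<close>)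
qed

lemma integral_indicator_noise:
  assumes "c \<le> N" "Q \<in> sets (pre_noise c)"
  shows "integrable M (\<lambda>\<omega>. indicator Q \<omega> * w c \<omega> $ j)"
    and "(\<integral>\<omega>. indicator Q \<omega> * w c \<omega> $ j \<partial>M) = 0"
proof -
  have "Q \<in> events" using assms sets_pre_noise_subset[of c] by auto
  then have Q: "integrable M (indicator Q :: 'a \<Rightarrow> real)"
    by (rule integrable_real_indicator) (simp add: less_top[symmetric])
  have w: "integrable M (\<lambda>\<omega>. w c \<omega> $ j)"
    using assms(1) by (intro integrable_if_square_integrable square_integrable_noise)
  note independent = indep_var_indicator_noise[OF assms, of j]
  show "integrable M (\<lambda>\<omega>. indicator Q \<omega> * w c \<omega> $ j)"
    using indep_var_integrable[OF independent Q w] .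
  show "(\<integral>\<omega>. indicator Q \<omega> * w c \<omega> $ j \<partial>M) = 0"
    using indep_var_lebesgue_integral[OF independent Q w] w_mean[OF assms(1)] by simp
qed

section \<open>The conditional mean\<close>

definition estimate :: "nat \<Rightarrow> 'a \<Rightarrow> real^'n" where
  "estimate k \<omega> = matpow A (age k \<omega>) *v x (k - age k \<omega>) \<omega>
     + (\<Sum>t\<in>{1..age k \<omega>}. matpow A (t - 1) *v (B *v u (k - t) \<omega>))"

text \<open>The noise driving \<open>x k\<close> since the freshest observation.  The indicator replaces the
  random summation range \<open>{1..age k \<omega>}\<close>, so that each summand is a noise \<open>w (k - t)\<close> restricted
  to an event that carries no information about it.\<close>
definition unobserved_noise :: "nat \<Rightarrow> 'n \<Rightarrow> 'a \<Rightarrow> real" where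
  "unobserved_noise k i \<omega> = (\<Sum>t\<in>{1..k}. \<Sum>l\<in>UNIV.
     matpow A (t - 1) $ i $ l * (indicator {\<omega> \<in> \<Omega>. t \<le> age k \<omega>} \<omega> * w (k - t) \<omega> $ l))"

lemma state_unroll:
  assumes "k \<le> N" "\<omega> \<in> \<Omega>"
  shows "j \<le> k \<Longrightarrow> x k \<omega> = matpow A j *v x (k - j) \<omega>
    + (\<Sum>t\<in>{1..j}. matpow A (t - 1) *v (B *v u (k - t) \<omega> + w (k - t) \<omega>))"
proof (induction j)
  case (Suc j)
  have "k - j = Suc (k - Suc j)" "k - Suc j < N" using Suc.prems assms(1) by simp_all
  then have "matpow A j *v x (k - j) \<omega> = matpow A (Suc j) *v x (k - Suc j) \<omega>
      + matpow A j *v (B *v u (k - Suc j) \<omega> + w (k - Suc j) \<omega>)"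
    using dyn[OF _ assms(2)]
    by (simp add: matrix_vector_right_distrib matrix_vector_mul_assoc matpow_commute add.assoc)
  with Suc show ?case by (simp add: add.assoc add.commute)
qed simp

lemma state_eq_estimate_plus_noise:
  assumes "k \<le> N" "\<omega> \<in> \<Omega>"
  shows "x k \<omega> $ i = estimate k \<omega> $ i + unobserved_noise k i \<omega>"
proof -
  define z where "z = age k \<omega>"
  have z: "z \<le> k" unfolding z_def by (rule age_le)
  have "x k \<omega> = estimate k \<omega> + (\<Sum>t\<in>{1..z}. matpow A (t - 1) *v w (k - t) \<omega>)"
    unfolding state_unroll[OF assms z] estimate_def z_def[symmetric]
    by (simp add: matrix_vector_right_distrib sum.distrib add.assoc)
  then have "x k \<omega> $ i = estimate k \<omega> $ i + (\<Sum>t\<in>{1..z}. (matpow A (t - 1) *v w (k - t) \<omega>) $ i)"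
    by simp
  also have "(\<Sum>t\<in>{1..z}. (matpow A (t - 1) *v w (k - t) \<omega>) $ i)
      = (\<Sum>t\<in>{t \<in> {1..k}. t \<le> z}. (matpow A (t - 1) *v w (k - t) \<omega>) $ i)"
    using z by (intro sum.cong) auto
  also have "\<dots> = (\<Sum>t\<in>{1..k}. if t \<le> z then (matpow A (t - 1) *v w (k - t) \<omega>) $ i else 0)"
    by (rule sum.inter_filter) simp
  also have "\<dots> = unobserved_noise k i \<omega>"
    unfolding unobserved_noise_def z_def using assms(2)
    by (intro sum.cong) (auto simp: matrix_vector_mult_def)
  finally show ?thesis .
qed

lemma info_e_subalgebra: "k \<le> N \<Longrightarrow> subalgebra M (info_e M x tau \<delta> u k)"
  unfolding subalgebra_def using sets_info_e_subset by simp

lemma sigma_finite_subalgebra_info_e: "k \<le> N \<Longrightarrow> sigma_finite_subalgebra M (info_e M x tau \<delta> u k)"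
  by (intro finite_measure_subalgebra_is_sigma_finite)
    (simp add: finite_measure_subalgebra_def finite_measure_subalgebra_axioms_def
      finite_measure_axioms info_e_subalgebra)

lemma ctrl_measurable_info_e: "r < k \<Longrightarrow> u r \<in> borel_measurable (info_e M x tau \<delta> u k)"
proof (rule measurable_info_e_generator)
  assume "r < k"
  then have "gen_sets M (u r) borel \<subseteq> info_c_generators k" unfolding info_c_generators_def by blast
  also have "\<dots> \<subseteq> sets (info_c M x tau \<delta> u k)" unfolding sets_info_c by (rule sigma_sets_superset_generator)
  finally show "gen_sets M (u r) borel \<subseteq> info_e_generators k" unfolding info_e_generators_def by blast
qed simp

lemma age_measurable_info_e: "t \<le> k \<Longrightarrow> age t \<in> measurable (info_e M x tau \<delta> u k) (count_space UNIV)"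
  by (rule measurable_info_e_generator) (auto simp: info_e_generators_def)

lemma freshest_obs_measurable_info_e: "(\<lambda>\<omega>. x (k - age k \<omega>) \<omega>) \<in> borel_measurable (info_e M x tau \<delta> u k)"
  by (rule measurable_info_e_generator) (auto simp: info_e_generators_def)

lemma estimate_measurable_info_e: "estimate k \<in> borel_measurable (info_e M x tau \<delta> u k)"
proof -
  let ?F = "info_e M x tau \<delta> u k"
  have "(\<lambda>\<omega>. matpow A (age k \<omega>) *v x (k - age k \<omega>) \<omega>) \<in> borel_measurable ?F"
    by (rule measurable_compose_countable[where f = "\<lambda>n \<omega>. matpow A n *v x (k - age k \<omega>) \<omega>",
      OF borel_measurable_matrix_vector_mult[OF freshest_obs_measurable_info_e] age_measurable_info_e]) simp
  moreover have "(\<lambda>\<omega>. \<Sum>t\<in>{1..age k \<omega>}. matpow A (t - 1) *v (B *v u (k - t) \<omega>)) \<in> borel_measurable ?F"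
  proof (rule measurable_compose_countable_on[OF age_measurable_info_e, where I = "{..k}"])
    fix n assume "n \<in> {..k}"
    then show "(\<lambda>\<omega>. \<Sum>t\<in>{1..n}. matpow A (t - 1) *v (B *v u (k - t) \<omega>)) \<in> borel_measurable ?F"
      by (intro borel_measurable_sum borel_measurable_matrix_vector_mult ctrl_measurable_info_e) auto
  qed (simp_all add: age_le)
  ultimately show ?thesis unfolding estimate_def[abs_def] by (rule borel_measurable_add)
qed

lemma ctrl_measurable: "j \<le> N \<Longrightarrow> u j \<in> borel_measurable M"
  using sets_info_c_subset_info_e[of j] sets_info_e_subset[of j]
  by (intro measurable_from_subalg[OF _ ctrl]) (auto simp: subalgebra_def)

lemma square_integrable_state: "k \<le> N \<Longrightarrow> square_integrable M (\<lambda>\<omega>. x k \<omega> $ i)"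
proof (induction k arbitrary: i)
  case 0
  show ?case by (rule square_integrable_vec_nth[OF x0_meas x0_L2])
next
  case (Suc k)
  then have k: "k < N" by simp
  have "square_integrable M (\<lambda>\<omega>. u k \<omega> $ l)" for l
    using k by (intro square_integrable_vec_nth ctrl_measurable ctrl_L2) simp_all
  moreover have "square_integrable M (\<lambda>\<omega>. w k \<omega> $ l)" for l
    using k by (auto intro: square_integrable_noise)
  ultimately have "square_integrable M (\<lambda>\<omega>. (\<Sum>l\<in>UNIV. A $ i $ l * x k \<omega> $ l)
      + (\<Sum>l\<in>UNIV. B $ i $ l * u k \<omega> $ l) + w k \<omega> $ i)"
    using k Suc.IH by (intro square_integrable_add square_integrable_sum square_integrable_cmult) auto
  then show ?case
    by (rule square_integrable_cong[rotated]) (simp add: dyn[OF k] matrix_vector_mult_def)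
qed

lemma square_integrable_unobserved_noise: "k \<le> N \<Longrightarrow> square_integrable M (unobserved_noise k i)"
proof -
  assume k: "k \<le> N"
  have "{\<omega> \<in> \<Omega>. t \<le> age k \<omega>} \<in> events" for t
    using measurable_sets[OF age_measurable_pre_noise[OF k], of "{t..}" N] sets_pre_noise_subset[of N]
    by (auto simp: vimage_def Int_def conj_commute)
  then show ?thesis
    unfolding unobserved_noise_def[abs_def] using k
    by (intro square_integrable_sum square_integrable_cmult square_integrable_mult_indicator
      square_integrable_noise) auto
qed

lemma square_integrable_estimate:
  assumes "k \<le> N"
  shows "square_integrable M (\<lambda>\<omega>. estimate k \<omega> $ i)"
  using square_integrable_diff[OF square_integrable_state[OF assms, of i]
    square_integrable_unobserved_noise[OF assms, of i]]
  by (rule square_integrable_cong[rotated]) (simp add: state_eq_estimate_plus_noise[OF assms])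

lemma integral_indicator_unobserved_noise:
  assumes "k \<le> N" "Q \<in> sets (info_e M x tau \<delta> u k)"
  shows "integrable M (\<lambda>\<omega>. indicator Q \<omega> * unobserved_noise k i \<omega>)"
    and "(\<integral>\<omega>. indicator Q \<omega> * unobserved_noise k i \<omega> \<partial>M) = 0"
proof -
  let ?summand = "\<lambda>t l \<omega>. indicator Q \<omega> * (indicator {\<omega> \<in> \<Omega>. t \<le> age k \<omega>} \<omega> * w (k - t) \<omega> $ l)"
  have "integrable M (?summand t l) \<and> (\<integral>\<omega>. ?summand t l \<omega> \<partial>M) = 0" if "t \<in> {1..k}" for t l
  proof -
    have "?summand t l = (\<lambda>\<omega>. indicator (Q \<inter> {\<omega> \<in> \<Omega>. t \<le> age k \<omega>}) \<omega> * w (k - t) \<omega> $ l)"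
      by (simp add: fun_eq_iff indicator_inter_arith)
    moreover have "Q \<inter> {\<omega> \<in> \<Omega>. t \<le> age k \<omega>} \<in> sets (pre_noise (k - t))"
      using that assms by (intro info_e_restrict_pre_noise) auto
    ultimately show ?thesis using integral_indicator_noise[of "k - t"] assms(1) by simp
  qed
  then have summand: "integrable M (?summand t l)" "(\<integral>\<omega>. ?summand t l \<omega> \<partial>M) = 0" if "t \<in> {1..k}" for t l
    using that by blast+
  have expand: "(\<lambda>\<omega>. indicator Q \<omega> * unobserved_noise k i \<omega>)
      = (\<lambda>\<omega>. \<Sum>t\<in>{1..k}. \<Sum>l\<in>UNIV. matpow A (t - 1) $ i $ l * ?summand t l \<omega>)"
    unfolding unobserved_noise_def by (simp add: fun_eq_iff sum_distrib_left mult.left_commute)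
  show "integrable M (\<lambda>\<omega>. indicator Q \<omega> * unobserved_noise k i \<omega>)"
    unfolding expand by (intro Bochner_Integration.integrable_sum integrable_mult_right summand)
  show "(\<integral>\<omega>. indicator Q \<omega> * unobserved_noise k i \<omega> \<partial>M) = 0"
    unfolding expand by (simp add: Bochner_Integration.integral_sum summand
      Bochner_Integration.integrable_sum integrable_mult_right)
qed

lemma real_cond_exp_state:
  assumes "k \<le> N"
  shows "AE \<omega> in M. real_cond_exp M (info_e M x tau \<delta> u k) (\<lambda>\<omega>. x k \<omega> $ i) \<omega> = estimate k \<omega> $ i"
proof -
  interpret sigma_finite_subalgebra M "info_e M x tau \<delta> u k"
    using assms by (rule sigma_finite_subalgebra_info_e)
  have estimate: "integrable M (\<lambda>\<omega>. estimate k \<omega> $ i)"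
    using assms by (intro integrable_if_square_integrable square_integrable_estimate)
  show ?thesis
  proof (rule real_cond_exp_charact[OF _ _ estimate borel_measurable_vec_nth[OF estimate_measurable_info_e]])
    show "integrable M (\<lambda>\<omega>. x k \<omega> $ i)"
      using assms by (intro integrable_if_square_integrable square_integrable_state)
    fix Q assume Q: "Q \<in> sets (info_e M x tau \<delta> u k)"
    then have "Q \<in> events" using sets_info_e_subset[OF assms] by blast
    then have "integrable M (\<lambda>\<omega>. indicator Q \<omega> * estimate k \<omega> $ i)"
      using integrable_real_mult_indicator[OF _ estimate] by (simp add: mult.commute)
    then have "(\<integral>\<omega>. indicator Q \<omega> * x k \<omega> $ i \<partial>M) = (\<integral>\<omega>. indicator Q \<omega> * estimate k \<omega> $ i \<partial>M)"
      using integral_indicator_unobserved_noise[OF assms Q, of i]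
      by (simp add: state_eq_estimate_plus_noise[OF assms] distrib_left cong: Bochner_Integration.integral_cong)
    then show "(\<integral>\<omega>\<in>Q. x k \<omega> $ i \<partial>M) = (\<integral>\<omega>\<in>Q. estimate k \<omega> $ i \<partial>M)"
      by (simp add: set_lebesgue_integral_def)
  qed
qed

theorem conditional_mean_estimate:
  assumes "k \<le> N"
  defines "xhat \<equiv> \<lambda>\<omega>. \<chi> i. real_cond_exp M (info_e M x tau \<delta> u k) (\<lambda>\<omega>'. x k \<omega>' $ i) \<omega>"
  shows "xhat \<in> borel_measurable (info_e M x tau \<delta> u k)"
    and "g \<in> borel_measurable (info_e M x tau \<delta> u k) \<Longrightarrow>
      (\<integral>\<^sup>+\<omega>. ennreal ((norm (x k \<omega> - xhat \<omega>))\<^sup>2) \<partial>M) \<le> (\<integral>\<^sup>+\<omega>. ennreal ((norm (x k \<omega> - g \<omega>))\<^sup>2) \<partial>M)"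
    and "AE \<omega> in M. xhat \<omega> = estimate k \<omega>"
proof -
  let ?F = "info_e M x tau \<delta> u k"
  interpret sigma_finite_subalgebra M ?F
    using assms(1) by (rule sigma_finite_subalgebra_info_e)
  show xhat: "xhat \<in> borel_measurable ?F"
    unfolding xhat_def by (rule borel_measurable_vec_lambda) simp
  have x: "x k \<in> borel_measurable M"
    using assms(1) ctrl_measurable w_meas by (intro state_measurable[OF refl _ x0_meas]) simp_all
  have component: "(\<integral>\<^sup>+\<omega>. ennreal ((x k \<omega> $ i - xhat \<omega> $ i)\<^sup>2) \<partial>M)
      \<le> (\<integral>\<^sup>+\<omega>. ennreal ((x k \<omega> $ i - g \<omega> $ i)\<^sup>2) \<partial>M)"
    if g: "g \<in> borel_measurable ?F" for g i
  proof -
    have "square_integrable M (\<lambda>\<omega>. x k \<omega> $ i)" using assms(1) by (rule square_integrable_state)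
    then show ?thesis
      unfolding xhat_def vec_lambda_beta
      by (intro real_cond_exp_least_squares integrable_if_square_integrable borel_measurable_vec_nth[OF g])
  qed
  show "(\<integral>\<^sup>+\<omega>. ennreal ((norm (x k \<omega> - xhat \<omega>))\<^sup>2) \<partial>M) \<le> (\<integral>\<^sup>+\<omega>. ennreal ((norm (x k \<omega> - g \<omega>))\<^sup>2) \<partial>M)"
    if g: "g \<in> borel_measurable ?F"
    unfolding nn_integral_norm_square_vec[OF x measurable_from_subalg[OF subalg xhat]]
      nn_integral_norm_square_vec[OF x measurable_from_subalg[OF subalg g]]
    by (rule sum_mono) (rule component[OF g])
  have "AE \<omega> in M. \<forall>i\<in>UNIV. real_cond_exp M ?F (\<lambda>\<omega>'. x k \<omega>' $ i) \<omega> = estimate k \<omega> $ i"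
    by (rule AE_finite_allI) (simp_all add: real_cond_exp_state[OF assms(1)])
  then show "AE \<omega> in M. xhat \<omega> = estimate k \<omega>"
    by eventually_elim (simp add: xhat_def vec_eq_iff)
qed

end

theorem lemma1:
  fixes M :: "'a measure" and N :: nat
    and A :: "real^'n^'n" and B :: "real^'m^'n"
    and W M0 :: "real^'n^'n" and m0 :: "real^'n"
    and x :: "nat \<Rightarrow> 'a \<Rightarrow> real^'n" and w :: "nat \<Rightarrow> 'a \<Rightarrow> real^'n"
    and u :: "nat \<Rightarrow> 'a \<Rightarrow> real^'m" and tau :: "nat \<Rightarrow> 'a \<Rightarrow> nat"
    and \<delta> :: "nat \<Rightarrow> 'a \<Rightarrow> bool" and v :: "nat \<Rightarrow> 'a \<Rightarrow> real"
  assumes prob: "prob_space M"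
    and x0_gauss: "gaussian_vec M (x 0) m0 M0"
    and w_gauss: "\<And>k. k \<le> N \<Longrightarrow> gaussian_vec M (w k) 0 W"
    and W_pd: "pd_matrix W"
    and dyn: "\<And>k \<omega>. k < N \<Longrightarrow> \<omega> \<in> space M \<Longrightarrow> x (Suc k) \<omega> = A *v x k \<omega> + B *v u k \<omega> + w k \<omega>"
    and tau_meas: "\<And>k. k \<le> N \<Longrightarrow> tau k \<in> measurable M (count_space UNIV)"
    and tau0: "\<And>\<omega>. \<omega> \<in> space M \<Longrightarrow> tau 0 \<omega> = 0"
    and v_meas: "\<And>k. k \<le> N \<Longrightarrow> v k \<in> borel_measurable M"
    and indep: "prob_space.indep_sets M
        (\<lambda>i. case i of SX0 \<Rightarrow> gen_sets M (x 0) borel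
                     | SW k \<Rightarrow> gen_sets M (w k) borel
                     | STau k \<Rightarrow> gen_sets M (tau k) (count_space UNIV)
                     | SV k \<Rightarrow> gen_sets M (v k) borel)
        ({SX0} \<union> SW ` {..N} \<union> STau ` {..N} \<union> SV ` {..N})"
    and ctrl: "\<And>k. k \<le> N \<Longrightarrow> u k \<in> borel_measurable (info_c M x tau \<delta> u k)"
    and ctrl_L2: "\<And>k. k \<le> N \<Longrightarrow> integrable M (\<lambda>\<omega>. (norm (u k \<omega>))\<^sup>2)"
    and trig: "\<And>k. k \<le> N \<Longrightarrow> \<delta> k \<in> measurable
        (sigma (space M) (sets (info_e M x tau \<delta> u k) \<union> gen_sets M (v k) borel)) (count_space UNIV)"
  shows "\<forall>k \<le> N.
     (let xhat = (\<lambda>\<omega>. \<chi> i. real_cond_exp M (info_e M x tau \<delta> u k) (\<lambda>\<omega>'. x k \<omega>' $ i) \<omega>);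
          z = (\<lambda>\<omega>. aoi_e (\<lambda>s. tau s \<omega>) k)
      in xhat \<in> borel_measurable (info_e M x tau \<delta> u k)
       \<and> (\<forall>g \<in> borel_measurable (info_e M x tau \<delta> u k).
            (\<integral>\<^sup>+\<omega>. ennreal ((norm (x k \<omega> - xhat \<omega>))\<^sup>2) \<partial>M)
              \<le> (\<integral>\<^sup>+\<omega>. ennreal ((norm (x k \<omega> - g \<omega>))\<^sup>2) \<partial>M))
       \<and> (AE \<omega> in M. xhat \<omega> = matpow A (z \<omega>) *v x (k - z \<omega>) \<omega>
              + (\<Sum>t\<in>{1..z \<omega>}. matpow A (t - 1) *v (B *v u (k - t) \<omega>))))"
proof -
  interpret aoi_system M N A B x w u tau \<delta> v
  proof (intro aoi_system.intro[OF prob] aoi_system_axioms.intro)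
    show "x 0 \<in> borel_measurable M" using x0_gauss by (simp add: gaussian_vec_def)
    show "integrable M (\<lambda>\<omega>. (norm (x 0 \<omega>))\<^sup>2)"
      using x0_gauss by (rule gaussian_vec_integrable_norm_square)
    fix k assume k: "k \<le> N"
    show "w k \<in> borel_measurable M" using w_gauss[OF k] by (simp add: gaussian_vec_def)
    show "integrable M (\<lambda>\<omega>. (norm (w k \<omega>))\<^sup>2)"
      using w_gauss[OF k] by (rule gaussian_vec_integrable_norm_square)
    show "(\<integral>\<omega>. w k \<omega> $ i \<partial>M) = 0" for i
      using gaussian_vec_component_moments(2)[OF w_gauss[OF k]] by simp
  qed (fact dyn tau_meas v_meas indep ctrl ctrl_L2 trig)+
  show ?thesis
    using conditional_mean_estimate unfolding Let_def estimate_def age_def by blast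
qed

end
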